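(* Let $G=(V,E)$ be a directed network with link set $A=E$. For each origin–destination (OD) pair $(o,d)$ let $K_{od}$ be a finite nonempty set of paths, $q_{od}\ge 0$ the demand, and $\delta^{od}_{a,k}\in\{0,1\}$ indicate whether path $k\in K_{od}$ uses link $a$. Let $\xi$ be a random network state, and for each link $a$ let $$t_a(x,\xi)=t_a^0(\xi)\Big[1+\alpha_a(\xi)\big(x/c_a(\xi)\big)^{\beta_a(\xi)}\Big]+\Delta_a(\xi),\qquad x\ge 0,$$ with $t_a^0(\xi)>0$, $c_a(\xi)>0$, $\alpha_a(\xi)\ge 0$, $\beta_a(\xi)\ge 1$, $\Delta_a(\xi)\ge 0$ (with all expectations below finite). Let $\theta>0$. For path flows $f=(f^{od}_k)$ define link flows $x_a=\sum_{o,d}\sum_{k\in K_{od}} f^{od}_k\delta^{od}_{a,k}$ and $$Z(f,\xi)=\sum_{a\in A}\int_0^{x_a} t_a(\omega,\xi)\,d\omega+\frac1\theta\sum_{o,d}\sum_{k\in K_{od}}\Big[(f^{od}_k+1)\ln(f^{od}_k+1)-f^{od}_k\Big].$$ Then the objective $f\mapsto \mathbb{E}[Z(f,\xi)]$ is convex on $\{f\ge 0\}$, and the problem of minimizing $\mathbb{E}[Z(f,\xi)]$ subject to $\sum_{k\in K_{od}} f^{od}_k=q_{od}$ for all $(o,d)$ and $f^{od}_k\ge 0$ has a unique optimal path flow vector.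
   Context: This is the truncated-logit stochastic user equilibrium (TSUE) program with an extended BPR link travel time function whose parameters depend on the random state $\xi$. *)

theory Defs
  imports "HOL-Probability.Probability"
begin

definition bpr_time :: "real \<Rightarrow> real \<Rightarrow> real \<Rightarrow> real \<Rightarrow> real \<Rightarrow> real \<Rightarrow> real" where
  "bpr_time t0 c \<alpha> \<beta> \<Delta> x = t0 * (1 + \<alpha> * (x / c) powr \<beta>) + \<Delta>"

definition link_flow ::
  "('w set) \<Rightarrow> ('w \<Rightarrow> 'k set) \<Rightarrow> ('w \<Rightarrow> 'a \<Rightarrow> 'k \<Rightarrow> bool) \<Rightarrow> ('w \<times> 'k \<Rightarrow> real) \<Rightarrow> 'a \<Rightarrow> real" where
  "link_flow W K \<delta> f a = (\<Sum>w\<in>W. \<Sum>k\<in>K w. f (w, k) * (if \<delta> w a k then 1 else 0))"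

definition tsue_Z ::
  "'a set \<Rightarrow> ('w set) \<Rightarrow> ('w \<Rightarrow> 'k set) \<Rightarrow> ('w \<Rightarrow> 'a \<Rightarrow> 'k \<Rightarrow> bool)
   \<Rightarrow> ('a \<Rightarrow> 's \<Rightarrow> real) \<Rightarrow> ('a \<Rightarrow> 's \<Rightarrow> real) \<Rightarrow> ('a \<Rightarrow> 's \<Rightarrow> real)
   \<Rightarrow> ('a \<Rightarrow> 's \<Rightarrow> real) \<Rightarrow> ('a \<Rightarrow> 's \<Rightarrow> real) \<Rightarrow> real
   \<Rightarrow> ('w \<times> 'k \<Rightarrow> real) \<Rightarrow> 's \<Rightarrow> real" where
  "tsue_Z A W K \<delta> t0 c \<alpha> \<beta> \<Delta> \<theta> f \<xi> =
     (\<Sum>a\<in>A. integral {0..link_flow W K \<delta> f a}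
                 (\<lambda>\<omega>. bpr_time (t0 a \<xi>) (c a \<xi>) (\<alpha> a \<xi>) (\<beta> a \<xi>) (\<Delta> a \<xi>) \<omega>))
     + (1 / \<theta>) * (\<Sum>w\<in>W. \<Sum>k\<in>K w. (f (w, k) + 1) * ln (f (w, k) + 1) - f (w, k))"

text \<open>Convexity of a real functional on a set of functions (written out, since function
  spaces are not instantiated as real vector spaces).\<close>
definition convex_fun_on :: "('p \<Rightarrow> real) set \<Rightarrow> (('p \<Rightarrow> real) \<Rightarrow> real) \<Rightarrow> bool" where
  "convex_fun_on S F \<longleftrightarrow>
     (\<forall>f\<in>S. \<forall>g\<in>S. \<forall>u::real. 0 \<le> u \<and> u \<le> 1 \<longrightarrow>
        (\<lambda>p. u * f p + (1 - u) * g p) \<in> S \<and>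
        F (\<lambda>p. u * f p + (1 - u) * g p) \<le> u * F f + (1 - u) * F g)"

end

theory Submission
  imports Defs
begin

text \<open>
  In every network state the objective is the Beckmann potential of the link costs at the
  induced link flows plus the entropy term. Link flows are linear in the path flows and the
  integral of a nondecreasing cost is convex, so the Beckmann part is convex; the entropy term
  \<open>(f + 1) ln (f + 1) - f\<close> lies strictly above its tangents (this is \<open>ln y < y - 1\<close> for
  \<open>y \<noteq> 1\<close>), so it is strictly convex. Expectation preserves convexity, and since the entropy
  term does not depend on the state, the expected objective is strictly convex. The feasible
  set is a compact polytope on which the expected objective is continuous by dominated
  convergence: costs are monotone, so the flow that places the total demand on every path
  dominates. Hence a minimizer exists, and strict convexity makes it unique.
\<close>

section \<open>Link costs and the Beckmann potential\<close>

lemma integral_ge_of_mono_on: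
  fixes h :: "real \<Rightarrow> real"
  assumes "mono_on {a..b} h" "h integrable_on {a..b}" "a \<le> b"
  shows "(b - a) * h a \<le> integral {a..b} h"
  using integral_le[of "\<lambda>_. h a" "{a..b}" h] assms by (auto simp: mono_onD)

lemma integral_le_of_mono_on:
  fixes h :: "real \<Rightarrow> real"
  assumes "mono_on {a..b} h" "h integrable_on {a..b}" "a \<le> b"
  shows "integral {a..b} h \<le> (b - a) * h b"
  using integral_le[of h "{a..b}" "\<lambda>_. h b"] assms by (auto simp: mono_onD)

lemma convex_on_integral_of_mono_on:
  fixes h :: "real \<Rightarrow> real"
  assumes cont: "continuous_on {0..} h" and mono: "mono_on {0..} h"
  shows "convex_on {0..} (\<lambda>x. integral {0..x} h)"
proof (rule convex_on_linorderI)
  fix t x y :: real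
  assume t: "0 < t" "t < 1" and xy: "x \<in> {0..}" "y \<in> {0..}" "x < y"
  define z where "z = (1 - t) * x + t * y"
  have "0 \<le> t * (y - x)" "0 \<le> (1 - t) * (y - x)"
    using t xy by auto
  then have xz: "x \<le> z" and zy: "z \<le> y"
    unfolding z_def by (simp_all add: algebra_simps)
  have integrable: "h integrable_on {a..b}" if "0 \<le> a" for a b
    using that by (intro integrable_continuous_real continuous_on_subset[OF cont]) auto
  have mono_Icc: "mono_on {a..b} h" if "0 \<le> a" for a b
    using that by (intro mono_on_subset[OF mono]) auto
  have integral_split: "integral {0..b} h = integral {0..a} h + integral {a..b} h"
    if "0 \<le> a" "a \<le> b" for a b
    using that integrable by (intro Henstock_Kurzweil_Integration.integral_combine[symmetric]) auto
  have "(1 - t) * integral {x..z} h \<le> (1 - t) * ((z - x) * h z)"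
    using t xz xy by (intro mult_left_mono integral_le_of_mono_on mono_Icc integrable) auto
  also have "\<dots> = t * ((y - z) * h z)"
    unfolding z_def by (simp add: algebra_simps)
  also have "\<dots> \<le> t * integral {z..y} h"
    using t zy xz xy by (intro mult_left_mono integral_ge_of_mono_on mono_Icc integrable) auto
  finally have "(1 - t) * integral {x..z} h \<le> t * integral {z..y} h" .
  moreover have "integral {0..z} h = integral {0..x} h + integral {x..z} h"
    "integral {0..y} h = integral {0..z} h + integral {z..y} h"
    using xy xz zy by (auto intro!: integral_split)
  ultimately show "integral {0..(1 - t) *\<^sub>R x + t *\<^sub>R y} h
      \<le> (1 - t) * integral {0..x} h + t * integral {0..y} h"
    by (simp add: z_def algebra_simps)
qed (simp add: convex_real_interval)

definition link_cost_function :: "(real \<Rightarrow> real) \<Rightarrow> bool" where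
  "link_cost_function h \<longleftrightarrow> continuous_on {0..} h \<and> mono_on {0..} h \<and> (\<forall>x\<ge>0. 0 \<le> h x)"

lemma bpr_time_link_cost_function:
  assumes "0 \<le> t0" "0 < c" "0 \<le> \<alpha>" "0 < \<beta>" "0 \<le> \<Delta>"
  shows "link_cost_function (bpr_time t0 c \<alpha> \<beta> \<Delta>)"
  unfolding link_cost_function_def
proof (intro conjI allI impI mono_onI)
  show "continuous_on {0..} (bpr_time t0 c \<alpha> \<beta> \<Delta>)"
    unfolding bpr_time_def using assms by (intro continuous_intros continuous_on_powr') auto
next
  fix x y :: real
  assume "x \<in> {0..}" "x \<le> y"
  then have "(x / c) powr \<beta> \<le> (y / c) powr \<beta>"
    using assms by (intro powr_mono2) (auto simp: divide_right_mono)
  then show "bpr_time t0 c \<alpha> \<beta> \<Delta> x \<le> bpr_time t0 c \<alpha> \<beta> \<Delta> y"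
    unfolding bpr_time_def using assms by (simp add: mult_left_mono)
qed (use assms in \<open>simp add: bpr_time_def\<close>)

lemma link_cost_integrable_on:
  assumes "link_cost_function h" "0 \<le> a"
  shows "h integrable_on {a..b}"
proof (rule integrable_continuous_real, rule continuous_on_subset)
  show "continuous_on {0..} h"
    using assms(1) by (simp add: link_cost_function_def)
qed (use assms(2) in auto)

lemma integral_link_cost_nonneg:
  assumes "link_cost_function h"
  shows "0 \<le> integral {0..x} h"
  using assms link_cost_integrable_on[OF assms] unfolding link_cost_function_def
  by (intro integral_nonneg) auto

lemma integral_link_cost_mono:
  assumes "link_cost_function h" "0 \<le> x" "x \<le> y"
  shows "integral {0..x} h \<le> integral {0..y} h"
  using assms link_cost_integrable_on[OF assms(1)] unfolding link_cost_function_def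
  by (intro integral_subset_le) auto

lemma integral_link_cost_tendsto:
  assumes "link_cost_function h" "X \<longlonglongrightarrow> x" "\<And>n. 0 \<le> X n"
  shows "(\<lambda>n. integral {0..X n} h) \<longlonglongrightarrow> integral {0..x} h"
proof (rule continuous_on_tendsto_compose[where s = "{0..x + 1}" and f = "\<lambda>y. integral {0..y} h"])
  show "continuous_on {0..x + 1} (\<lambda>y. integral {0..y} h)"
    by (intro indefinite_integral_continuous_1 link_cost_integrable_on assms(1)) simp
  have "0 \<le> x"
    using LIMSEQ_le_const[OF assms(2), of 0] assms(3) by blast
  then show "x \<in> {0..x + 1}"
    by simp
  show "\<forall>\<^sub>F n in sequentially. X n \<in> {0..x + 1}"
    using order_tendstoD(2)[OF assms(2), of "x + 1"]
    by (rule eventually_mono) (use assms(3) in auto)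
qed (rule assms(2))

definition beckmann :: "'a set \<Rightarrow> ('a \<Rightarrow> real \<Rightarrow> real) \<Rightarrow> ('a \<Rightarrow> real) \<Rightarrow> real" where
  "beckmann A h x = (\<Sum>a\<in>A. integral {0..x a} (h a))"

context
  fixes A :: "'a set" and h :: "'a \<Rightarrow> real \<Rightarrow> real"
  assumes link_cost: "\<And>a. a \<in> A \<Longrightarrow> link_cost_function (h a)"
begin

lemma beckmann_nonneg: "0 \<le> beckmann A h x"
  unfolding beckmann_def by (intro sum_nonneg integral_link_cost_nonneg link_cost)

lemma beckmann_mono:
  "(\<And>a. a \<in> A \<Longrightarrow> 0 \<le> x a \<and> x a \<le> y a) \<Longrightarrow> beckmann A h x \<le> beckmann A h y"
  unfolding beckmann_def by (intro sum_mono integral_link_cost_mono link_cost) auto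

lemma beckmann_convex_combination:
  assumes "\<And>a. a \<in> A \<Longrightarrow> 0 \<le> x a" "\<And>a. a \<in> A \<Longrightarrow> 0 \<le> y a" "0 \<le> u" "u \<le> 1"
  shows "beckmann A h (\<lambda>a. u * x a + (1 - u) * y a)
    \<le> u * beckmann A h x + (1 - u) * beckmann A h y"
proof -
  have "integral {0..u * x a + (1 - u) * y a} (h a)
      \<le> u * integral {0..x a} (h a) + (1 - u) * integral {0..y a} (h a)" if "a \<in> A" for a
    using convex_onD[OF convex_on_integral_of_mono_on, of "h a" "1 - u" "x a" "y a"]
      link_cost[OF that] assms that
    by (simp add: link_cost_function_def)
  then show ?thesis
    unfolding beckmann_def sum_distrib_left sum.distrib[symmetric] by (rule sum_mono)
qed

lemma beckmann_tendsto:
  "(\<And>a. a \<in> A \<Longrightarrow> (\<lambda>n. X n a) \<longlonglongrightarrow> x a) \<Longrightarrow> (\<And>n a. a \<in> A \<Longrightarrow> 0 \<le> X n a) \<Longrightarrow>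
    (\<lambda>n. beckmann A h (X n)) \<longlonglongrightarrow> beckmann A h x"
  unfolding beckmann_def by (intro tendsto_sum integral_link_cost_tendsto link_cost)

end

lemma link_flow_convex_combination:
  "link_flow W K \<delta> (\<lambda>p. u * f p + (1 - u) * g p) a
    = u * link_flow W K \<delta> f a + (1 - u) * link_flow W K \<delta> g a"
  unfolding link_flow_def sum_distrib_left sum.distrib[symmetric]
  by (intro sum.cong) (auto simp: algebra_simps)

lemma link_flow_nonneg: "(\<And>p. p \<in> Sigma W K \<Longrightarrow> 0 \<le> f p) \<Longrightarrow> 0 \<le> link_flow W K \<delta> f a"
  unfolding link_flow_def by (intro sum_nonneg) auto

lemma link_flow_mono:
  "(\<And>p. p \<in> Sigma W K \<Longrightarrow> f p \<le> g p) \<Longrightarrow> link_flow W K \<delta> f a \<le> link_flow W K \<delta> g a"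
  unfolding link_flow_def by (intro sum_mono) auto

lemma link_flow_tendsto:
  "(\<And>p. p \<in> Sigma W K \<Longrightarrow> (\<lambda>n. X n p) \<longlonglongrightarrow> f p) \<Longrightarrow>
    (\<lambda>n. link_flow W K \<delta> (X n) a) \<longlonglongrightarrow> link_flow W K \<delta> f a"
  unfolding link_flow_def by (intro tendsto_sum tendsto_mult tendsto_const) auto

section \<open>The entropy term\<close>

lemma mult_ln_div_le: "0 < s \<Longrightarrow> 0 < n \<Longrightarrow> s * ln (n / s) \<le> n - s"
  for s n :: real
  using mult_left_mono[OF ln_le_minus_one[of "n / s"], of s] by (simp add: algebra_simps)

lemma mult_ln_div_less: "0 < s \<Longrightarrow> 0 < n \<Longrightarrow> n \<noteq> s \<Longrightarrow> s * ln (n / s) < n - s"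
  for s n :: real
  using mult_strict_left_mono[of "ln (n / s)" "n / s - 1" s]
    ln_le_minus_one[of "n / s"] ln_eq_minus_one[of "n / s"]
  by (fastforce simp: algebra_simps)

definition logit_entropy :: "real \<Rightarrow> real" where
  "logit_entropy y = (y + 1) * ln (y + 1) - y"

lemma logit_entropy_tangent_gap:
  assumes "-1 < x" "-1 < m"
  shows "logit_entropy x - (logit_entropy m + ln (m + 1) * (x - m))
    = (m + 1) - (x + 1) - (x + 1) * ln ((m + 1) / (x + 1))"
  using assms by (simp add: logit_entropy_def ln_div algebra_simps)

lemma logit_entropy_tangent_le:
  "-1 < x \<Longrightarrow> -1 < m \<Longrightarrow> logit_entropy m + ln (m + 1) * (x - m) \<le> logit_entropy x"
  using logit_entropy_tangent_gap mult_ln_div_le[of "x + 1" "m + 1"] by fastforce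

lemma logit_entropy_tangent_less:
  "-1 < x \<Longrightarrow> -1 < m \<Longrightarrow> x \<noteq> m \<Longrightarrow> logit_entropy m + ln (m + 1) * (x - m) < logit_entropy x"
  using logit_entropy_tangent_gap mult_ln_div_less[of "x + 1" "m + 1"] by fastforce

lemma logit_entropy_nonneg: "-1 < y \<Longrightarrow> 0 \<le> logit_entropy y"
  using logit_entropy_tangent_le[of y 0] by (simp add: logit_entropy_def)

lemma logit_entropy_tendsto:
  "X \<longlonglongrightarrow> y \<Longrightarrow> -1 < y \<Longrightarrow> (\<lambda>n. logit_entropy (X n)) \<longlonglongrightarrow> logit_entropy y"
  unfolding logit_entropy_def by (intro tendsto_intros) auto

lemma convex_combination_gt_minus_one:
  fixes x y u :: real
  assumes "-1 < x" "-1 < y" "0 \<le> u" "u \<le> 1"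
  shows "-1 < u * x + (1 - u) * y"
proof -
  have "u * x + (1 - u) * y + 1 = u * (x + 1) + (1 - u) * (y + 1)"
    by (simp add: algebra_simps)
  moreover have "0 < u * (x + 1) + (1 - u) * (y + 1)"
    using assms by (cases "u = 0") (auto intro: add_pos_nonneg)
  ultimately show ?thesis
    by linarith
qed

lemma logit_entropy_strict_convex_combination:
  assumes "-1 < x" "-1 < y" "x \<noteq> y" "0 < u" "u < 1"
  shows "logit_entropy (u * x + (1 - u) * y) < u * logit_entropy x + (1 - u) * logit_entropy y"
proof -
  define m where "m = u * x + (1 - u) * y"
  have m: "-1 < m"
    unfolding m_def using assms by (intro convex_combination_gt_minus_one) auto
  have "x - m = (1 - u) * (x - y)" "y - m = u * (y - x)"
    unfolding m_def by (simp_all add: algebra_simps)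
  then have "x \<noteq> m" "y \<noteq> m"
    using assms by auto
  have "u * (logit_entropy m + ln (m + 1) * (x - m)) < u * logit_entropy x"
    using assms m \<open>x \<noteq> m\<close> by (intro mult_strict_left_mono logit_entropy_tangent_less) auto
  moreover have "(1 - u) * (logit_entropy m + ln (m + 1) * (y - m)) < (1 - u) * logit_entropy y"
    using assms m \<open>y \<noteq> m\<close> by (intro mult_strict_left_mono logit_entropy_tangent_less) auto
  moreover have "u * (logit_entropy m + ln (m + 1) * (x - m))
      + (1 - u) * (logit_entropy m + ln (m + 1) * (y - m)) = logit_entropy m"
    unfolding m_def by (simp add: algebra_simps)
  ultimately show ?thesis
    unfolding m_def[symmetric] by linarith
qed

lemma logit_entropy_convex_combination:
  assumes "-1 < x" "-1 < y" "0 \<le> u" "u \<le> 1"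
  shows "logit_entropy (u * x + (1 - u) * y) \<le> u * logit_entropy x + (1 - u) * logit_entropy y"
proof (cases "x = y \<or> u = 0 \<or> u = 1")
  case True
  then show ?thesis
    by (auto simp: algebra_simps)
next
  case False
  then show ?thesis
    using logit_entropy_strict_convex_combination[of x y u] assms by fastforce
qed

definition path_entropy :: "'p set \<Rightarrow> ('p \<Rightarrow> real) \<Rightarrow> real" where
  "path_entropy P f = (\<Sum>p\<in>P. logit_entropy (f p))"

lemma path_entropy_nonneg: "(\<And>p. p \<in> P \<Longrightarrow> -1 < f p) \<Longrightarrow> 0 \<le> path_entropy P f"
  unfolding path_entropy_def by (intro sum_nonneg logit_entropy_nonneg)

lemma path_entropy_tendsto:
  "(\<And>p. p \<in> P \<Longrightarrow> (\<lambda>n. X n p) \<longlonglongrightarrow> f p) \<Longrightarrow> (\<And>p. p \<in> P \<Longrightarrow> -1 < f p) \<Longrightarrow>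
    (\<lambda>n. path_entropy P (X n)) \<longlonglongrightarrow> path_entropy P f"
  unfolding path_entropy_def by (intro tendsto_sum logit_entropy_tendsto)

lemma path_entropy_convex_combination:
  assumes "\<And>p. p \<in> P \<Longrightarrow> -1 < f p" "\<And>p. p \<in> P \<Longrightarrow> -1 < g p" "0 \<le> u" "u \<le> 1"
  shows "path_entropy P (\<lambda>p. u * f p + (1 - u) * g p)
    \<le> u * path_entropy P f + (1 - u) * path_entropy P g"
  unfolding path_entropy_def sum_distrib_left sum.distrib[symmetric]
  using assms by (intro sum_mono logit_entropy_convex_combination)

lemma path_entropy_strict_convex_combination:
  assumes "finite P" "\<And>p. p \<in> P \<Longrightarrow> -1 < f p" "\<And>p. p \<in> P \<Longrightarrow> -1 < g p"
    and "p \<in> P" "f p \<noteq> g p" "0 < u" "u < 1"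
  shows "path_entropy P (\<lambda>p. u * f p + (1 - u) * g p)
    < u * path_entropy P f + (1 - u) * path_entropy P g"
  unfolding path_entropy_def sum_distrib_left sum.distrib[symmetric]
  using assms by (intro sum_strict_mono_ex1 ballI bexI[of _ p]
      logit_entropy_convex_combination logit_entropy_strict_convex_combination) auto

section \<open>Minimizers over path flows\<close>

lemma minimizer_exists_if_sequentially_continuous:
  fixes F :: "('p \<Rightarrow> real) set" and \<Phi> :: "('p \<Rightarrow> real) \<Rightarrow> real"
  assumes "finite P" "F \<noteq> {}" "bdd_below (\<Phi> ` F)"
    and bounded: "\<And>f p. f \<in> F \<Longrightarrow> p \<in> P \<Longrightarrow> \<bar>f p\<bar> \<le> b"
    and closed: "\<And>X l. (\<And>n. X n \<in> F) \<Longrightarrow> (\<And>p. p \<in> P \<Longrightarrow> (\<lambda>n. X n p) \<longlonglongrightarrow> l p) \<Longrightarrow>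
      (\<And>p. p \<notin> P \<Longrightarrow> l p = 0) \<Longrightarrow> l \<in> F"
    and continuous: "\<And>X l. (\<And>n. X n \<in> F) \<Longrightarrow> l \<in> F \<Longrightarrow>
      (\<And>p. p \<in> P \<Longrightarrow> (\<lambda>n. X n p) \<longlonglongrightarrow> l p) \<Longrightarrow> (\<lambda>n. \<Phi> (X n)) \<longlonglongrightarrow> \<Phi> l"
  shows "\<exists>f\<in>F. \<forall>g\<in>F. \<Phi> f \<le> \<Phi> g"
proof -
  define v where "v = Inf (\<Phi> ` F)"
  have "\<exists>f\<in>F. \<Phi> f < v + inverse (Suc n)" for n
    using cInf_lessD[of "\<Phi> ` F" "v + inverse (Suc n)"] assms(2) unfolding v_def by auto
  then obtain X where X: "\<And>n. X n \<in> F" "\<And>n. \<Phi> (X n) < v + inverse (Suc n)"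
    by metis
  \<comment> \<open>Bolzano--Weierstrass on the finitely many coordinates in \<open>P\<close>\<close>
  have "\<forall>d\<subseteq>P. \<exists>l r. strict_mono r \<and>
      (\<forall>e>0. \<forall>\<^sub>F n in sequentially. \<forall>p\<in>d. dist (X (r n) p) (l p) < e)"
    by (rule compact_lemma_general[where proj = "\<lambda>f p. f p" and unproj = "\<lambda>f. f"])
      (use assms(1) bounded X(1) in \<open>auto intro!: boundedI[of _ b]\<close>)
  then obtain l0 r where r: "strict_mono r"
    and l0: "\<forall>e>0. \<forall>\<^sub>F n in sequentially. \<forall>p\<in>P. dist (X (r n) p) (l0 p) < e"
    by blast
  define l where "l p = (if p \<in> P then l0 p else 0)" for p
  have lim: "(\<lambda>n. X (r n) p) \<longlonglongrightarrow> l p" if "p \<in> P" for p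
  proof (rule tendstoI)
    fix e :: real
    assume "0 < e"
    then have "\<forall>\<^sub>F n in sequentially. \<forall>p\<in>P. dist (X (r n) p) (l0 p) < e"
      using l0 by blast
    then show "\<forall>\<^sub>F n in sequentially. dist (X (r n) p) (l p) < e"
      by (rule eventually_mono) (use that in \<open>auto simp: l_def\<close>)
  qed
  have "l \<in> F"
  proof (rule closed[of "\<lambda>n. X (r n)"])
    show "X (r n) \<in> F" for n
      by (rule X(1))
    show "(\<lambda>n. X (r n) p) \<longlonglongrightarrow> l p" if "p \<in> P" for p
      using that by (rule lim)
    show "l p = 0" if "p \<notin> P" for p
      using that by (simp add: l_def)
  qed
  have "(\<lambda>n. \<Phi> (X (r n))) \<longlonglongrightarrow> \<Phi> l"
    by (rule continuous[of "\<lambda>n. X (r n)"]) (auto simp: X(1) \<open>l \<in> F\<close> lim)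
  moreover have "(\<lambda>n. v + inverse (Suc (r n))) \<longlonglongrightarrow> v + 0"
    using LIMSEQ_subseq_LIMSEQ[OF LIMSEQ_inverse_real_of_nat r]
    by (intro tendsto_add tendsto_const) (simp add: o_def)
  ultimately have "\<Phi> l \<le> v"
    using X(2) by (intro LIMSEQ_le) (auto intro: less_imp_le)
  moreover have "v \<le> \<Phi> g" if "g \<in> F" for g
    unfolding v_def using assms(3) that by (intro cInf_lower) auto
  ultimately show ?thesis
    using \<open>l \<in> F\<close> by force
qed

lemma unique_minimizer_if_strictly_convex:
  fixes F :: "('p \<Rightarrow> real) set" and \<Phi> :: "('p \<Rightarrow> real) \<Rightarrow> real"
  assumes convex: "\<And>f g u. f \<in> F \<Longrightarrow> g \<in> F \<Longrightarrow> 0 \<le> u \<Longrightarrow> u \<le> 1 \<Longrightarrow>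
      (\<lambda>p. u * f p + (1 - u) * g p) \<in> F"
    and strict: "\<And>f g u. f \<in> F \<Longrightarrow> g \<in> F \<Longrightarrow> f \<noteq> g \<Longrightarrow> 0 < u \<Longrightarrow> u < 1 \<Longrightarrow>
      \<Phi> (\<lambda>p. u * f p + (1 - u) * g p) < u * \<Phi> f + (1 - u) * \<Phi> g"
    and "\<exists>f\<in>F. \<forall>g\<in>F. \<Phi> f \<le> \<Phi> g"
  shows "\<exists>!f. f \<in> F \<and> (\<forall>g\<in>F. \<Phi> f \<le> \<Phi> g)"
proof (rule ex_ex1I)
  show "\<exists>f. f \<in> F \<and> (\<forall>g\<in>F. \<Phi> f \<le> \<Phi> g)"
    using assms(3) by blast
next
  fix f g
  assume f: "f \<in> F \<and> (\<forall>h\<in>F. \<Phi> f \<le> \<Phi> h)" and g: "g \<in> F \<and> (\<forall>h\<in>F. \<Phi> g \<le> \<Phi> h)"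
  let ?m = "\<lambda>p. 1 / 2 * f p + (1 - 1 / 2) * g p"
  show "f = g"
  proof (rule ccontr)
    assume "f \<noteq> g"
    then have "\<Phi> ?m < 1 / 2 * \<Phi> f + (1 - 1 / 2) * \<Phi> g"
      using f g by (intro strict) auto
    moreover have "\<Phi> f \<le> \<Phi> ?m" "\<Phi> g \<le> \<Phi> ?m"
      using f g convex[of f g "1 / 2"] by auto
    ultimately show False
      by simp
  qed
qed

text \<open>Flows are total functions on all pairs; forcing them to vanish off \<open>Sigma W K\<close> is what
  makes the minimizer unique as a function.\<close>

definition feasible_flows :: "'w set \<Rightarrow> ('w \<Rightarrow> 'k set) \<Rightarrow> ('w \<Rightarrow> real) \<Rightarrow> ('w \<times> 'k \<Rightarrow> real) set" where
  "feasible_flows W K q = {f. (\<forall>p. p \<notin> Sigma W K \<longrightarrow> f p = 0)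
     \<and> (\<forall>w\<in>W. (\<Sum>k\<in>K w. f (w, k)) = q w) \<and> (\<forall>p\<in>Sigma W K. 0 \<le> f p)}"

lemma feasible_flows_nonempty:
  assumes "\<And>w. w \<in> W \<Longrightarrow> finite (K w)" "\<And>w. w \<in> W \<Longrightarrow> K w \<noteq> {}" "\<And>w. w \<in> W \<Longrightarrow> 0 \<le> q w"
  shows "feasible_flows W K q \<noteq> {}"
proof -
  define f where "f = (\<lambda>(w, k). if w \<in> W \<and> k = (SOME k. k \<in> K w) then q w else 0)"
  have "(SOME k. k \<in> K w) \<in> K w" if "w \<in> W" for w
    using assms(2)[OF that] by (simp add: some_in_eq)
  then have "f \<in> feasible_flows W K q"
    using assms unfolding feasible_flows_def f_def by (auto simp: sum.delta)
  then show ?thesis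
    by blast
qed

lemma feasible_flows_convex_combination:
  assumes "f \<in> feasible_flows W K q" "g \<in> feasible_flows W K q" "0 \<le> u" "u \<le> 1"
  shows "(\<lambda>p. u * f p + (1 - u) * g p) \<in> feasible_flows W K q"
proof -
  have "(\<Sum>k\<in>K w. u * f (w, k) + (1 - u) * g (w, k)) = q w" if "w \<in> W" for w
  proof -
    have "(\<Sum>k\<in>K w. u * f (w, k) + (1 - u) * g (w, k))
        = u * (\<Sum>k\<in>K w. f (w, k)) + (1 - u) * (\<Sum>k\<in>K w. g (w, k))"
      by (simp add: sum.distrib sum_distrib_left)
    also have "\<dots> = u * q w + (1 - u) * q w"
      using assms(1,2) that by (simp add: feasible_flows_def)
    finally show ?thesis
      by (simp add: algebra_simps)
  qed
  moreover have "0 \<le> u * f p + (1 - u) * g p" if "p \<in> Sigma W K" for p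
    using assms that by (intro add_nonneg_nonneg mult_nonneg_nonneg) (auto simp: feasible_flows_def)
  ultimately show ?thesis
    using assms(1,2) by (auto simp: feasible_flows_def)
qed

lemma feasible_flows_bounded:
  assumes "finite W" "\<And>w. w \<in> W \<Longrightarrow> finite (K w)" "f \<in> feasible_flows W K q" "p \<in> Sigma W K"
  shows "\<bar>f p\<bar> \<le> (\<Sum>w\<in>W. \<bar>q w\<bar>)"
proof -
  obtain w k where p: "p = (w, k)" "w \<in> W" "k \<in> K w"
    using assms(4) by blast
  have "f (w, k) \<le> (\<Sum>k\<in>K w. f (w, k))"
    using assms p unfolding feasible_flows_def by (intro member_le_sum) auto
  also have "\<dots> \<le> \<bar>q w\<bar>"
    using assms p unfolding feasible_flows_def by auto
  also have "\<dots> \<le> (\<Sum>w\<in>W. \<bar>q w\<bar>)"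
    using assms p by (intro member_le_sum) auto
  finally show ?thesis
    using assms p unfolding feasible_flows_def by auto
qed

lemma feasible_flows_closed:
  assumes "\<And>n. X n \<in> feasible_flows W K q" "\<And>p. p \<in> Sigma W K \<Longrightarrow> (\<lambda>n. X n p) \<longlonglongrightarrow> l p"
    and "\<And>p. p \<notin> Sigma W K \<Longrightarrow> l p = 0"
  shows "l \<in> feasible_flows W K q"
proof -
  have "(\<Sum>k\<in>K w. l (w, k)) = q w" if "w \<in> W" for w
  proof (rule LIMSEQ_unique)
    show "(\<lambda>n. \<Sum>k\<in>K w. X n (w, k)) \<longlonglongrightarrow> (\<Sum>k\<in>K w. l (w, k))"
      using that by (intro tendsto_sum assms(2)) auto
    show "(\<lambda>n. \<Sum>k\<in>K w. X n (w, k)) \<longlonglongrightarrow> q w"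
      using assms(1) that by (simp add: feasible_flows_def)
  qed
  moreover have "0 \<le> l p" if "p \<in> Sigma W K" for p
    using LIMSEQ_le_const[OF assms(2)[OF that], of 0] assms(1) that
    by (auto simp: feasible_flows_def)
  ultimately show ?thesis
    using assms(3) by (auto simp: feasible_flows_def)
qed

section \<open>The stochastic assignment problem\<close>

locale stochastic_logit_assignment =
  fixes M :: "'s measure" and A :: "'a set" and W :: "'w set" and K :: "'w \<Rightarrow> 'k set"
    and \<delta> :: "'w \<Rightarrow> 'a \<Rightarrow> 'k \<Rightarrow> bool" and h :: "'s \<Rightarrow> 'a \<Rightarrow> real \<Rightarrow> real" and \<theta> :: real
  assumes finite_W: "finite W" and finite_K: "\<And>w. w \<in> W \<Longrightarrow> finite (K w)"
    and link_cost: "\<And>\<xi> a. \<xi> \<in> space M \<Longrightarrow> a \<in> A \<Longrightarrow> link_cost_function (h \<xi> a)"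
    and \<theta>_pos: "0 < \<theta>"
    and integrable_congestion: "\<And>f. (\<And>p. p \<in> Sigma W K \<Longrightarrow> 0 \<le> f p) \<Longrightarrow>
      integrable M (\<lambda>\<xi>. beckmann A (h \<xi>) (link_flow W K \<delta> f))"
begin

definition congestion :: "('w \<times> 'k \<Rightarrow> real) \<Rightarrow> 's \<Rightarrow> real" where
  "congestion f \<xi> = beckmann A (h \<xi>) (link_flow W K \<delta> f)"

definition expected_cost :: "('w \<times> 'k \<Rightarrow> real) \<Rightarrow> real" where
  "expected_cost f = integral\<^sup>L M (congestion f) + path_entropy (Sigma W K) f / \<theta>"

lemma congestion_integrable: "(\<And>p. p \<in> Sigma W K \<Longrightarrow> 0 \<le> f p) \<Longrightarrow> integrable M (congestion f)"
  unfolding congestion_def by (rule integrable_congestion)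

lemma congestion_nonneg: "\<xi> \<in> space M \<Longrightarrow> 0 \<le> congestion f \<xi>"
  unfolding congestion_def by (intro beckmann_nonneg link_cost)

lemma congestion_mono:
  "\<xi> \<in> space M \<Longrightarrow> (\<And>p. p \<in> Sigma W K \<Longrightarrow> 0 \<le> f p \<and> f p \<le> g p) \<Longrightarrow>
    congestion f \<xi> \<le> congestion g \<xi>"
  unfolding congestion_def by (intro beckmann_mono link_cost conjI link_flow_nonneg link_flow_mono) auto

lemma congestion_convex_combination:
  "\<xi> \<in> space M \<Longrightarrow> (\<And>p. p \<in> Sigma W K \<Longrightarrow> 0 \<le> f p) \<Longrightarrow> (\<And>p. p \<in> Sigma W K \<Longrightarrow> 0 \<le> g p) \<Longrightarrow>
    0 \<le> u \<Longrightarrow> u \<le> 1 \<Longrightarrow>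
    congestion (\<lambda>p. u * f p + (1 - u) * g p) \<xi> \<le> u * congestion f \<xi> + (1 - u) * congestion g \<xi>"
  unfolding congestion_def link_flow_convex_combination
  by (intro beckmann_convex_combination link_cost link_flow_nonneg)

lemma integral_congestion_convex_combination:
  assumes "\<And>p. p \<in> Sigma W K \<Longrightarrow> 0 \<le> f p" "\<And>p. p \<in> Sigma W K \<Longrightarrow> 0 \<le> g p" "0 \<le> u" "u \<le> 1"
  shows "integral\<^sup>L M (congestion (\<lambda>p. u * f p + (1 - u) * g p))
    \<le> u * integral\<^sup>L M (congestion f) + (1 - u) * integral\<^sup>L M (congestion g)"
proof -
  have "integral\<^sup>L M (congestion (\<lambda>p. u * f p + (1 - u) * g p))
      \<le> integral\<^sup>L M (\<lambda>\<xi>. u * congestion f \<xi> + (1 - u) * congestion g \<xi>)"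
    using assms
    by (intro integral_mono congestion_integrable congestion_convex_combination
        Bochner_Integration.integrable_add integrable_mult_right add_nonneg_nonneg mult_nonneg_nonneg)
      auto
  also have "\<dots> = u * integral\<^sup>L M (congestion f) + (1 - u) * integral\<^sup>L M (congestion g)"
    using assms by (simp add: congestion_integrable)
  finally show ?thesis .
qed

lemma integral_congestion_tendsto:
  assumes bounded: "\<And>n p. p \<in> Sigma W K \<Longrightarrow> 0 \<le> X n p \<and> X n p \<le> b"
    and lim: "\<And>p. p \<in> Sigma W K \<Longrightarrow> (\<lambda>n. X n p) \<longlonglongrightarrow> f p"
  shows "(\<lambda>n. integral\<^sup>L M (congestion (X n))) \<longlonglongrightarrow> integral\<^sup>L M (congestion f)"
  \<comment> \<open>congestion is monotone in the flows, so the constant flow \<open>b\<close> dominates\<close>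
proof (rule integral_dominated_convergence[where w = "congestion (\<lambda>_. b)"])
  have f_nonneg: "0 \<le> f p" if "p \<in> Sigma W K" for p
    using LIMSEQ_le_const[OF lim[OF that], of 0] bounded[OF that] by blast
  then show "congestion f \<in> borel_measurable M"
    by (intro borel_measurable_integrable congestion_integrable)
  show "congestion (X n) \<in> borel_measurable M" for n
    using bounded by (intro borel_measurable_integrable congestion_integrable) blast
  show "integrable M (congestion (\<lambda>_. b))"
    using bounded by (intro congestion_integrable) force
  show "AE \<xi> in M. (\<lambda>n. congestion (X n) \<xi>) \<longlonglongrightarrow> congestion f \<xi>"
    unfolding congestion_def using bounded lim
    by (intro AE_I2 beckmann_tendsto link_cost link_flow_tendsto link_flow_nonneg) auto
  show "AE \<xi> in M. norm (congestion (X n) \<xi>) \<le> congestion (\<lambda>_. b) \<xi>" for n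
    using bounded by (intro AE_I2) (simp add: congestion_nonneg congestion_mono)
qed

lemma expected_cost_convex_combination:
  assumes "\<And>p. p \<in> Sigma W K \<Longrightarrow> 0 \<le> f p" "\<And>p. p \<in> Sigma W K \<Longrightarrow> 0 \<le> g p" "0 \<le> u" "u \<le> 1"
  shows "expected_cost (\<lambda>p. u * f p + (1 - u) * g p) \<le> u * expected_cost f + (1 - u) * expected_cost g"
proof -
  have "path_entropy (Sigma W K) (\<lambda>p. u * f p + (1 - u) * g p)
      \<le> u * path_entropy (Sigma W K) f + (1 - u) * path_entropy (Sigma W K) g"
    using assms by (intro path_entropy_convex_combination) force+
  then have "path_entropy (Sigma W K) (\<lambda>p. u * f p + (1 - u) * g p) / \<theta>
      \<le> (u * path_entropy (Sigma W K) f + (1 - u) * path_entropy (Sigma W K) g) / \<theta>"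
    using \<theta>_pos by (intro divide_right_mono) auto
  then have "path_entropy (Sigma W K) (\<lambda>p. u * f p + (1 - u) * g p) / \<theta>
      \<le> u * (path_entropy (Sigma W K) f / \<theta>) + (1 - u) * (path_entropy (Sigma W K) g / \<theta>)"
    by (simp add: add_divide_distrib)
  moreover have "integral\<^sup>L M (congestion (\<lambda>p. u * f p + (1 - u) * g p))
      \<le> u * integral\<^sup>L M (congestion f) + (1 - u) * integral\<^sup>L M (congestion g)"
    using assms by (rule integral_congestion_convex_combination)
  ultimately show ?thesis
    unfolding expected_cost_def distrib_left by linarith
qed

lemma expected_cost_strict_convex_combination:
  assumes "\<And>p. p \<in> Sigma W K \<Longrightarrow> 0 \<le> f p" "\<And>p. p \<in> Sigma W K \<Longrightarrow> 0 \<le> g p"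
    and "p \<in> Sigma W K" "f p \<noteq> g p" "0 < u" "u < 1"
  shows "expected_cost (\<lambda>p. u * f p + (1 - u) * g p) < u * expected_cost f + (1 - u) * expected_cost g"
proof -
  have "path_entropy (Sigma W K) (\<lambda>p. u * f p + (1 - u) * g p)
      < u * path_entropy (Sigma W K) f + (1 - u) * path_entropy (Sigma W K) g"
  proof (rule path_entropy_strict_convex_combination)
    show "finite (Sigma W K)"
      using finite_W finite_K by blast
    show "-1 < f p" "-1 < g p" if "p \<in> Sigma W K" for p
      using assms(1,2)[OF that] by linarith+
  qed (use assms in auto)
  then have "path_entropy (Sigma W K) (\<lambda>p. u * f p + (1 - u) * g p) / \<theta>
      < (u * path_entropy (Sigma W K) f + (1 - u) * path_entropy (Sigma W K) g) / \<theta>"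
    using \<theta>_pos by (intro divide_strict_right_mono) auto
  then have "path_entropy (Sigma W K) (\<lambda>p. u * f p + (1 - u) * g p) / \<theta>
      < u * (path_entropy (Sigma W K) f / \<theta>) + (1 - u) * (path_entropy (Sigma W K) g / \<theta>)"
    by (simp add: add_divide_distrib)
  moreover have "integral\<^sup>L M (congestion (\<lambda>p. u * f p + (1 - u) * g p))
      \<le> u * integral\<^sup>L M (congestion f) + (1 - u) * integral\<^sup>L M (congestion g)"
    using assms by (intro integral_congestion_convex_combination) auto
  ultimately show ?thesis
    unfolding expected_cost_def distrib_left by linarith
qed

lemma convex_fun_on_expected_cost: "convex_fun_on {f. \<forall>p\<in>Sigma W K. f p \<ge> 0} expected_cost"
  unfolding convex_fun_on_def
proof (intro ballI allI impI conjI)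
  fix f g :: "'w \<times> 'k \<Rightarrow> real" and u :: real
  assume "f \<in> {f. \<forall>p\<in>Sigma W K. f p \<ge> 0}" "g \<in> {f. \<forall>p\<in>Sigma W K. f p \<ge> 0}" "0 \<le> u \<and> u \<le> 1"
  then show "(\<lambda>p. u * f p + (1 - u) * g p) \<in> {f. \<forall>p\<in>Sigma W K. f p \<ge> 0}"
    and "expected_cost (\<lambda>p. u * f p + (1 - u) * g p) \<le> u * expected_cost f + (1 - u) * expected_cost g"
    by (auto intro!: expected_cost_convex_combination add_nonneg_nonneg mult_nonneg_nonneg)
qed

lemma expected_cost_nonneg: "(\<And>p. p \<in> Sigma W K \<Longrightarrow> 0 \<le> f p) \<Longrightarrow> 0 \<le> expected_cost f"
  unfolding expected_cost_def using \<theta>_pos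
  by (intro add_nonneg_nonneg integral_nonneg_AE AE_I2 congestion_nonneg divide_nonneg_pos
      path_entropy_nonneg) force+

lemma expected_cost_tendsto:
  assumes bounded: "\<And>n p. p \<in> Sigma W K \<Longrightarrow> 0 \<le> X n p \<and> X n p \<le> b"
    and lim: "\<And>p. p \<in> Sigma W K \<Longrightarrow> (\<lambda>n. X n p) \<longlonglongrightarrow> f p"
  shows "(\<lambda>n. expected_cost (X n)) \<longlonglongrightarrow> expected_cost f"
proof -
  have "-1 < f p" if "p \<in> Sigma W K" for p
    using LIMSEQ_le_const[OF lim[OF that], of 0] bounded[OF that] by force
  then have "(\<lambda>n. path_entropy (Sigma W K) (X n)) \<longlonglongrightarrow> path_entropy (Sigma W K) f"
    using lim by (intro path_entropy_tendsto)
  then show ?thesis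
    unfolding expected_cost_def using integral_congestion_tendsto[OF bounded lim] \<theta>_pos
    by (intro tendsto_add tendsto_divide tendsto_const) auto
qed

theorem expected_cost_unique_minimizer:
  assumes "\<And>w. w \<in> W \<Longrightarrow> K w \<noteq> {}" "\<And>w. w \<in> W \<Longrightarrow> 0 \<le> q w"
  shows "\<exists>!f. f \<in> feasible_flows W K q \<and> (\<forall>g\<in>feasible_flows W K q. expected_cost f \<le> expected_cost g)"
proof (rule unique_minimizer_if_strictly_convex)
  let ?F = "feasible_flows W K q"
  have nonneg: "0 \<le> f p" if "f \<in> ?F" "p \<in> Sigma W K" for f p
    using that unfolding feasible_flows_def by blast
  have bounded: "\<bar>f p\<bar> \<le> (\<Sum>w\<in>W. \<bar>q w\<bar>)" if "f \<in> ?F" "p \<in> Sigma W K" for f p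
    using finite_W finite_K that by (rule feasible_flows_bounded)
  show "(\<lambda>p. u * f p + (1 - u) * g p) \<in> ?F" if "f \<in> ?F" "g \<in> ?F" "0 \<le> u" "u \<le> 1" for f g u
    using that by (rule feasible_flows_convex_combination)
  show "expected_cost (\<lambda>p. u * f p + (1 - u) * g p) < u * expected_cost f + (1 - u) * expected_cost g"
    if "f \<in> ?F" "g \<in> ?F" "f \<noteq> g" "0 < u" "u < 1" for f g u
  proof -
    obtain p where "f p \<noteq> g p"
      using \<open>f \<noteq> g\<close> by blast
    moreover have "\<forall>p. p \<notin> Sigma W K \<longrightarrow> f p = 0 \<and> g p = 0"
      using that(1,2) unfolding feasible_flows_def by blast
    ultimately have "p \<in> Sigma W K"
      by metis
    with \<open>f p \<noteq> g p\<close> show ?thesis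
      using that nonneg by (intro expected_cost_strict_convex_combination) auto
  qed
  show "\<exists>f\<in>?F. \<forall>g\<in>?F. expected_cost f \<le> expected_cost g"
  proof (rule minimizer_exists_if_sequentially_continuous)
    show "finite (Sigma W K)"
      using finite_W finite_K by blast
    show "?F \<noteq> {}"
      using finite_K assms by (rule feasible_flows_nonempty)
    show "bdd_below (expected_cost ` ?F)"
      using nonneg expected_cost_nonneg by (intro bdd_belowI2[of _ 0]) auto
    show "\<And>X l. (\<And>n. X n \<in> ?F) \<Longrightarrow> (\<And>p. p \<in> Sigma W K \<Longrightarrow> (\<lambda>n. X n p) \<longlonglongrightarrow> l p) \<Longrightarrow>
        (\<And>p. p \<notin> Sigma W K \<Longrightarrow> l p = 0) \<Longrightarrow> l \<in> ?F"
      by (rule feasible_flows_closed)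
    show "(\<lambda>n. expected_cost (X n)) \<longlonglongrightarrow> expected_cost l"
      if "\<And>n. X n \<in> ?F" "\<And>p. p \<in> Sigma W K \<Longrightarrow> (\<lambda>n. X n p) \<longlonglongrightarrow> l p" for X l
      using that nonneg bounded by (intro expected_cost_tendsto[where b = "\<Sum>w\<in>W. \<bar>q w\<bar>"]) force+
  qed (use bounded in blast)
qed

end

text \<open>The parameter conditions are the weakest under which every extended BPR function is a
  link cost function; the theorem assumes \<open>t0 > 0\<close> and \<open>\<beta> \<ge> 1\<close>.\<close>

locale tsue_bpr = prob_space M for M :: "'s measure" +
  fixes A :: "'a set" and W :: "'w set" and K :: "'w \<Rightarrow> 'k set"
    and \<delta> :: "'w \<Rightarrow> 'a \<Rightarrow> 'k \<Rightarrow> bool" and t0 c \<alpha> \<beta> \<Delta> :: "'a \<Rightarrow> 's \<Rightarrow> real" and \<theta> :: real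
  assumes finite_W: "finite W" and finite_K: "\<And>w. w \<in> W \<Longrightarrow> finite (K w)"
    and t0_nonneg: "\<And>a \<xi>. a \<in> A \<Longrightarrow> \<xi> \<in> space M \<Longrightarrow> 0 \<le> t0 a \<xi>"
    and c_pos: "\<And>a \<xi>. a \<in> A \<Longrightarrow> \<xi> \<in> space M \<Longrightarrow> 0 < c a \<xi>"
    and \<alpha>_nonneg: "\<And>a \<xi>. a \<in> A \<Longrightarrow> \<xi> \<in> space M \<Longrightarrow> 0 \<le> \<alpha> a \<xi>"
    and \<beta>_pos: "\<And>a \<xi>. a \<in> A \<Longrightarrow> \<xi> \<in> space M \<Longrightarrow> 0 < \<beta> a \<xi>"
    and \<Delta>_nonneg: "\<And>a \<xi>. a \<in> A \<Longrightarrow> \<xi> \<in> space M \<Longrightarrow> 0 \<le> \<Delta> a \<xi>"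
    and \<theta>_pos: "0 < \<theta>"
    and integrable_tsue_Z: "\<And>f. \<forall>p\<in>Sigma W K. 0 \<le> f p \<Longrightarrow>
      integrable M (tsue_Z A W K \<delta> t0 c \<alpha> \<beta> \<Delta> \<theta> f)"
begin

abbreviation bpr_costs :: "'s \<Rightarrow> 'a \<Rightarrow> real \<Rightarrow> real" where
  "bpr_costs \<xi> a \<equiv> bpr_time (t0 a \<xi>) (c a \<xi>) (\<alpha> a \<xi>) (\<beta> a \<xi>) (\<Delta> a \<xi>)"

lemma tsue_Z_eq_beckmann_entropy: "tsue_Z A W K \<delta> t0 c \<alpha> \<beta> \<Delta> \<theta> f \<xi>
    = beckmann A (bpr_costs \<xi>) (link_flow W K \<delta> f) + path_entropy (Sigma W K) f / \<theta>"
  using finite_W finite_K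
  by (simp add: tsue_Z_def beckmann_def path_entropy_def logit_entropy_def sum.Sigma split_def)

sublocale stochastic_logit_assignment M A W K \<delta> bpr_costs \<theta>
proof
  show "link_cost_function (bpr_costs \<xi> a)" if "\<xi> \<in> space M" "a \<in> A" for \<xi> a
    using that by (intro bpr_time_link_cost_function t0_nonneg c_pos \<alpha>_nonneg \<beta>_pos \<Delta>_nonneg)
  show "integrable M (\<lambda>\<xi>. beckmann A (bpr_costs \<xi>) (link_flow W K \<delta> f))"
    if "\<And>p. p \<in> Sigma W K \<Longrightarrow> 0 \<le> f p" for f
  proof -
    have "integrable M (\<lambda>\<xi>. tsue_Z A W K \<delta> t0 c \<alpha> \<beta> \<Delta> \<theta> f \<xi> - path_entropy (Sigma W K) f / \<theta>)"
      using integrable_tsue_Z[of f] that by auto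
    then show ?thesis
      by (simp add: tsue_Z_eq_beckmann_entropy)
  qed
qed (use finite_W finite_K \<theta>_pos in auto)

lemma integral_tsue_Z:
  assumes "\<forall>p\<in>Sigma W K. 0 \<le> f p"
  shows "integral\<^sup>L M (tsue_Z A W K \<delta> t0 c \<alpha> \<beta> \<Delta> \<theta> f) = expected_cost f"
proof -
  have "integrable M (congestion f)"
    using assms by (intro congestion_integrable) auto
  then show ?thesis
    unfolding tsue_Z_eq_beckmann_entropy expected_cost_def congestion_def
    by (subst Bochner_Integration.integral_add) (auto simp: prob_space)
qed

lemma convex_fun_on_integral_tsue_Z:
  "convex_fun_on {f. \<forall>p\<in>Sigma W K. f p \<ge> 0} (\<lambda>f. integral\<^sup>L M (tsue_Z A W K \<delta> t0 c \<alpha> \<beta> \<Delta> \<theta> f))"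
  using convex_fun_on_expected_cost unfolding convex_fun_on_def by (simp add: integral_tsue_Z)

theorem integral_tsue_Z_unique_minimizer:
  assumes "\<And>w. w \<in> W \<Longrightarrow> K w \<noteq> {}" "\<And>w. w \<in> W \<Longrightarrow> 0 \<le> q w"
  shows "\<exists>!f. f \<in> feasible_flows W K q \<and> (\<forall>g\<in>feasible_flows W K q.
    integral\<^sup>L M (tsue_Z A W K \<delta> t0 c \<alpha> \<beta> \<Delta> \<theta> f) \<le> integral\<^sup>L M (tsue_Z A W K \<delta> t0 c \<alpha> \<beta> \<Delta> \<theta> g))"
proof -
  have "integral\<^sup>L M (tsue_Z A W K \<delta> t0 c \<alpha> \<beta> \<Delta> \<theta> f) = expected_cost f"
    if "f \<in> feasible_flows W K q" for f
    using that unfolding feasible_flows_def by (intro integral_tsue_Z) blast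
  then show ?thesis
    using expected_cost_unique_minimizer[OF assms] by (simp cong: conj_cong)
qed

end

theorem proposition1:
  fixes V :: "'v set" and E :: "('v \<times> 'v) set"
    and W :: "('v \<times> 'v) set" and K :: "'v \<times> 'v \<Rightarrow> 'k set"
    and q :: "'v \<times> 'v \<Rightarrow> real"
    and \<delta> :: "'v \<times> 'v \<Rightarrow> 'v \<times> 'v \<Rightarrow> 'k \<Rightarrow> bool"
    and M :: "'s measure"
    and t0 c \<alpha> \<beta> \<Delta> :: "'v \<times> 'v \<Rightarrow> 's \<Rightarrow> real"
    and \<theta> :: real
  assumes finV: "finite V" and E_sub: "E \<subseteq> V \<times> V"
    and W_sub: "W \<subseteq> V \<times> V"
    and finK: "\<And>w. w \<in> W \<Longrightarrow> finite (K w)"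
    and neK: "\<And>w. w \<in> W \<Longrightarrow> K w \<noteq> {}"
    and q_nonneg: "\<And>w. w \<in> W \<Longrightarrow> q w \<ge> 0"
    and P: "prob_space M"
    and t0_pos: "\<And>a \<xi>. a \<in> E \<Longrightarrow> \<xi> \<in> space M \<Longrightarrow> t0 a \<xi> > 0"
    and c_pos: "\<And>a \<xi>. a \<in> E \<Longrightarrow> \<xi> \<in> space M \<Longrightarrow> c a \<xi> > 0"
    and \<alpha>_nonneg: "\<And>a \<xi>. a \<in> E \<Longrightarrow> \<xi> \<in> space M \<Longrightarrow> \<alpha> a \<xi> \<ge> 0"
    and \<beta>_ge1: "\<And>a \<xi>. a \<in> E \<Longrightarrow> \<xi> \<in> space M \<Longrightarrow> \<beta> a \<xi> \<ge> 1"
    and \<Delta>_nonneg: "\<And>a \<xi>. a \<in> E \<Longrightarrow> \<xi> \<in> space M \<Longrightarrow> \<Delta> a \<xi> \<ge> 0"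
    and \<theta>_pos: "\<theta> > 0"
    and integrable_Z: "\<And>f. (\<forall>p\<in>Sigma W K. f p \<ge> 0) \<Longrightarrow>
           integrable M (tsue_Z E W K \<delta> t0 c \<alpha> \<beta> \<Delta> \<theta> f)"
  shows "convex_fun_on {f. \<forall>p\<in>Sigma W K. f p \<ge> 0}
           (\<lambda>f. integral\<^sup>L M (tsue_Z E W K \<delta> t0 c \<alpha> \<beta> \<Delta> \<theta> f))
         \<and> (\<exists>!f. (\<forall>p. p \<notin> Sigma W K \<longrightarrow> f p = 0)
                 \<and> (\<forall>w\<in>W. (\<Sum>k\<in>K w. f (w, k)) = q w)
                 \<and> (\<forall>p\<in>Sigma W K. f p \<ge> 0)
                 \<and> (\<forall>g. (\<forall>p. p \<notin> Sigma W K \<longrightarrow> g p = 0)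
                        \<and> (\<forall>w\<in>W. (\<Sum>k\<in>K w. g (w, k)) = q w)
                        \<and> (\<forall>p\<in>Sigma W K. g p \<ge> 0)
                        \<longrightarrow> integral\<^sup>L M (tsue_Z E W K \<delta> t0 c \<alpha> \<beta> \<Delta> \<theta> f)
                            \<le> integral\<^sup>L M (tsue_Z E W K \<delta> t0 c \<alpha> \<beta> \<Delta> \<theta> g)))"
proof -
  have "finite W"
    using finite_subset[OF W_sub] finV by blast
  then interpret tsue_bpr M E W K \<delta> t0 c \<alpha> \<beta> \<Delta> \<theta>
  proof (intro tsue_bpr.intro tsue_bpr_axioms.intro)
    show "0 \<le> t0 a \<xi>" if "a \<in> E" "\<xi> \<in> space M" for a \<xi>
      using t0_pos[OF that] by simp
    show "0 < \<beta> a \<xi>" if "a \<in> E" "\<xi> \<in> space M" for a \<xi>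
      using \<beta>_ge1[OF that] by simp
  qed (use P finK c_pos \<alpha>_nonneg \<Delta>_nonneg \<theta>_pos integrable_Z in auto)
  show ?thesis
    using convex_fun_on_integral_tsue_Z integral_tsue_Z_unique_minimizer[OF neK q_nonneg]
    by (simp only: feasible_flows_def mem_Collect_eq Ball_def conj_assoc)
qed

end
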